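(* Let $n,m\ge 1$, let $\Lambda\in\mathbb{R}^{n\times n}$ be Schur stable (all eigenvalues in the open unit disk), and let $W_{\mathrm{in}}\in\mathbb{R}^{n\times m}$, $W_{\mathrm{out}}\in\mathbb{R}^{m\times n}$. Consider the discrete-time recurrent neural network \[ x(k+1)=\Lambda x(k)+W_{\mathrm{in}}w(k)+v(k),\quad z(k)=W_{\mathrm{out}}x(k),\quad w(k)=\Phi(z(k)+s(k)),\quad k=0,1,2,\dots, \] with $x(0)=0$, external inputs $s:\{0,1,\dots\}\to\mathbb{R}^m$, $v:\{0,1,\dots\}\to\mathbb{R}^n$, and $\Phi$ the entrywise ReLU. Suppose $\Pi\in\mathbb{S}^{2m}$ satisfies the IQC \[ \sum_{k=0}^{\tau}\begin{bmatrix}\xi(k)\\ \zeta(k)\end{bmatrix}^T\Pi\begin{bmatrix}\xi(k)\\ \zeta(k)\end{bmatrix}\ge 0\quad\text{for all }\tau\in\{0,1,2,\dots\} \] for every signal $\xi\in l_{2e}$ (with values in $\mathbb{R}^m$) and $\zeta=\Phi\xi$ (i.e. $\zeta(k)=\Phi(\xi(k))$). If there exist a positive semidefinite $P\in\mathbb{S}^n$ and a diagonal matrix $S\in\mathbb{R}^{m\times m}$ with strictly positive diagonal entries such that \[ \begin{bmatrix}-P&0\\0&-S\end{bmatrix}+\begin{bmatrix}\Lambda&W_{\mathrm{in}}\\ W_{\mathrm{out}}&0\end{bmatrix}^T\begin{bmatrix}P&0\\0&S\end{bmatrix}\begin{bmatrix}\Lambda&W_{\mathrm{in}}\\ W_{\mathrm{out}}&0\end{bmatrix}+\begin{bmatrix}W_{\mathrm{out}}&0\\0&I_m\end{bmatrix}^T\Pi\begin{bmatrix}W_{\mathrm{out}}&0\\0&I_m\end{bmatrix}\prec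 0, \] then the RNN is finite gain $l_2$ stable from the input $[s^T\ v^T]^T$ to the output $[z^T\ w^T]^T$, i.e. there exists $\gamma\ge 0$ such that $\|[z^T\ w^T]^T_\tau\|_2\le\gamma\|[s^T\ v^T]^T_\tau\|_2$ for all $s,v\in l_{2e}$ and all $\tau\ge 0$.
   Context: The ReLU $\Phi:\mathbb{R}^m\to\mathbb{R}^m$ is $\Phi(\xi)=[\phi(\xi_1),\dots,\phi(\xi_m)]^T$ with $\phi(\eta)=\eta$ for $\eta\ge0$ and $\phi(\eta)=0$ for $\eta<0$. $\mathbb{S}^k$ denotes real symmetric $k\times k$ matrices; $A\prec0$ means negative definite. For a discrete-time signal $w$ on $\{0,1,2,\dots\}$, $\|w\|_2=\sqrt{\sum_{k\ge0}|w(k)|_2^2}$ with $|\cdot|_2$ the Euclidean norm; $l_2=\{w:\|w\|_2<\infty\}$; the truncation $w_\tau$ is $w_\tau(k)=w(k)$ for $k\le\tau$ and $0$ for $k>\tau$; $l_{2e}=\{w: w_\tau\in l_2\ \forall\tau\ge0\}$. *)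

theory Defs
  imports "HOL-Analysis.Analysis"
begin

definition relu :: "real^'m \<Rightarrow> real^'m" where
  "relu x = (\<chi> i. (if x $ i \<ge> 0 then x $ i else 0))"

definition vstack :: "real^'a \<Rightarrow> real^'b \<Rightarrow> real^('a + 'b)" where
  "vstack x y = (\<chi> i. case i of Inl a \<Rightarrow> x $ a | Inr b \<Rightarrow> y $ b)"

definition block2 ::
  "real^'c^'a \<Rightarrow> real^'d^'a \<Rightarrow> real^'c^'b \<Rightarrow> real^'d^'b \<Rightarrow> real^('c + 'd)^('a + 'b)" where
  "block2 A B C D = (\<chi> i j. case i of
      Inl a \<Rightarrow> (case j of Inl c \<Rightarrow> A $ a $ c | Inr d \<Rightarrow> B $ a $ d)
    | Inr b \<Rightarrow> (case j of Inl c \<Rightarrow> C $ b $ c | Inr d \<Rightarrow> D $ b $ d))"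

definition schur_stable :: "real^'n^'n \<Rightarrow> bool" where
  "schur_stable A \<longleftrightarrow>
     (\<forall>(lam::complex) (u::complex^'n). u \<noteq> 0 \<and>
        (\<chi> i j. complex_of_real (A $ i $ j)) *v u = lam *s u \<longrightarrow> cmod lam < 1)"

definition symmetric_mat :: "real^'n^'n \<Rightarrow> bool" where
  "symmetric_mat M \<longleftrightarrow> transpose M = M"

definition psd :: "real^'n^'n \<Rightarrow> bool" where
  "psd M \<longleftrightarrow> symmetric_mat M \<and> (\<forall>x. x \<bullet> (M *v x) \<ge> 0)"

definition neg_def :: "real^'n^'n \<Rightarrow> bool" where
  "neg_def M \<longleftrightarrow> symmetric_mat M \<and> (\<forall>x. x \<noteq> 0 \<longrightarrow> x \<bullet> (M *v x) < 0)"

definition pos_diag :: "real^'n^'n \<Rightarrow> bool" where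
  "pos_diag S \<longleftrightarrow> (\<forall>i j. i \<noteq> j \<longrightarrow> S $ i $ j = 0) \<and> (\<forall>i. S $ i $ i > 0)"

definition trunc :: "(nat \<Rightarrow> 'a::zero) \<Rightarrow> nat \<Rightarrow> nat \<Rightarrow> 'a" where
  "trunc w \<tau> k = (if k \<le> \<tau> then w k else 0)"

definition l2norm :: "(nat \<Rightarrow> 'a::real_normed_vector) \<Rightarrow> real" where
  "l2norm w = sqrt (\<Sum>k. (norm (w k))\<^sup>2)"

definition in_l2 :: "(nat \<Rightarrow> 'a::real_normed_vector) \<Rightarrow> bool" where
  "in_l2 w \<longleftrightarrow> summable (\<lambda>k. (norm (w k))\<^sup>2)"

definition in_l2e :: "(nat \<Rightarrow> 'a::real_normed_vector) \<Rightarrow> bool" where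
  "in_l2e w \<longleftrightarrow> (\<forall>\<tau>. in_l2 (trunc w \<tau>))"

end

theory Submission
  imports Defs
begin

(* The LMI states that the storage function V x = x^T P x, combined with the sector supply
   (Wout x)^T S (Wout x) - w^T S w of the ReLU and the IQC supply for Pi, decreases along the
   unforced network by at least e |(x, w)|^2.  For positive diagonal S the ReLU gives
   w^T S w <= xi^T S xi, and the inputs (s, v) perturb each of the three quadratic forms by a
   bilinear plus quadratic term in |(x, w)| and |(s, v)|, which Young's inequality absorbs into
   half of the decrease.  Summing the resulting dissipation inequality up to tau, V telescopes
   (V (x 0) = 0 and V >= 0) and the IQC makes the summed Pi-supply nonnegative, so that
   sum |(z, w)|^2 <= gamma^2 * sum |(s, v)|^2. *)

lemma sum_UNIV_Plus:
  "(\<Sum>i\<in>(UNIV::('a::finite + 'b::finite) set). f i) =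
     (\<Sum>a\<in>UNIV. f (Inl a)) + (\<Sum>b\<in>UNIV. f (Inr b))"
  using sum.Plus[of "UNIV::'a set" "UNIV::'b set" f] by (simp add: comp_def)

lemma inner_vstack: "vstack a b \<bullet> vstack c d = a \<bullet> c + b \<bullet> d"
  by (simp add: inner_vec_def vstack_def sum_UNIV_Plus)

lemma vstack_add: "vstack a b + vstack c d = vstack (a + c) (b + d)"
  by (simp add: vstack_def vec_eq_iff split: sum.splits)

lemma norm_vstack_power2: "(norm (vstack a b))\<^sup>2 = (norm a)\<^sup>2 + (norm b)\<^sup>2"
  by (simp add: power2_norm_eq_inner inner_vstack)

lemma norm_le_norm_vstack_left: "norm a \<le> norm (vstack a b)"
  by (rule power2_le_imp_le) (simp_all add: norm_vstack_power2)

lemma norm_le_norm_vstack_right: "norm b \<le> norm (vstack a b)"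
  by (rule power2_le_imp_le) (simp_all add: norm_vstack_power2)

lemma norm_vstack_le: "norm (vstack a b) \<le> norm a + norm b"
  by (rule power2_le_imp_le) (simp_all add: norm_vstack_power2 power2_sum)

lemma block2_mult_vstack:
  "block2 A B C D *v vstack x y = vstack (A *v x + B *v y) (C *v x + D *v y)"
  by (simp add: block2_def vstack_def matrix_vector_mult_def sum_UNIV_Plus vec_eq_iff
      split: sum.splits)

lemma matrix_vector_mult_uminus: "(- A) *v x = - (A *v (x::real^'n::finite))"
  by (simp add: matrix_vector_mult_def vec_eq_iff sum_negf)

lemma norm_matrix_vector_le: "norm (A *v x) \<le> onorm ((*v) A) * norm (x::real^'n::finite)"
  by (rule onorm[OF matrix_vector_mul_bounded_linear])

lemma onorm_matrix_nonneg: "0 \<le> onorm ((*v) (A::real^'n::finite^'m::finite))"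
  by (rule onorm_pos_le[OF matrix_vector_mul_bounded_linear])

lemma inner_transpose_mult_mult:
  fixes T :: "real^'a::finite^'b::finite" and D :: "real^'b^'b"
  shows "u \<bullet> ((transpose T ** D ** T) *v u) = (T *v u) \<bullet> (D *v (T *v u))"
proof -
  have "u \<bullet> ((transpose T ** D ** T) *v u) = u \<bullet> ((D *v (T *v u)) v* T)"
    by (simp add: matrix_vector_mul_assoc[symmetric] transpose_matrix_vector)
  also have "\<dots> = (T *v u) \<bullet> (D *v (T *v u))"
    by (metis dot_lmul_matrix inner_commute)
  finally show ?thesis .
qed

lemma symmetric_mat_inner_commute: "symmetric_mat A \<Longrightarrow> u \<bullet> (A *v t) = t \<bullet> (A *v u)"
  by (metis dot_lmul_matrix inner_commute symmetric_mat_def transpose_matrix_vector)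

lemma quadratic_form_add:
  "symmetric_mat A \<Longrightarrow>
     (u + t) \<bullet> (A *v (u + t)) = u \<bullet> (A *v u) + 2 * (u \<bullet> (A *v t)) + t \<bullet> (A *v t)"
  using symmetric_mat_inner_commute[of A u t]
  by (simp add: matrix_vector_right_distrib inner_add_left inner_add_right)

lemma quadratic_form_add_le:
  fixes A :: "real^'n::finite^'n"
  assumes "symmetric_mat A" "norm u \<le> a" "norm t \<le> b"
  shows "(u + t) \<bullet> (A *v (u + t)) \<le> u \<bullet> (A *v u) + onorm ((*v) A) * (2 * a * b + b\<^sup>2)"
proof -
  let ?K = "onorm ((*v) A)"
  have bilinear: "\<bar>u' \<bullet> (A *v t')\<bar> \<le> ?K * norm u' * norm t'" for u' t' :: "real^'n"
  proof -
    have "\<bar>u' \<bullet> (A *v t')\<bar> \<le> norm u' * norm (A *v t')" by (rule Cauchy_Schwarz_ineq2)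
    also have "\<dots> \<le> norm u' * (?K * norm t')"
      by (simp add: mult_left_mono norm_matrix_vector_le)
    finally show ?thesis by (simp add: algebra_simps)
  qed
  have K: "0 \<le> ?K" by (rule onorm_matrix_nonneg)
  have "u \<bullet> (A *v t) \<le> ?K * a * b"
  proof -
    have "?K * (norm u * norm t) \<le> ?K * (a * b)"
      using assms(2,3) K by (intro mult_left_mono mult_mono') auto
    then show ?thesis using bilinear[of u t] by (simp add: abs_le_iff mult.assoc)
  qed
  moreover have "t \<bullet> (A *v t) \<le> ?K * b * b"
  proof -
    have "?K * (norm t * norm t) \<le> ?K * (b * b)"
      using assms(3) K by (intro mult_left_mono mult_mono') auto
    then show ?thesis using bilinear[of t t] by (simp add: abs_le_iff mult.assoc)
  qed
  ultimately show ?thesis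
    using quadratic_form_add[OF assms(1), of u t] by (simp add: power2_eq_square algebra_simps)
qed

lemma neg_def_uniform:
  assumes "neg_def (M::real^'n::finite^'n)"
  obtains e where "e > 0" "\<And>y. y \<bullet> (M *v y) \<le> - e * (norm y)\<^sup>2"
proof -
  have "continuous_on (sphere 0 1) (\<lambda>y::real^'n. y \<bullet> (M *v y))"
    by (intro continuous_intros)
  moreover have "compact (sphere (0::real^'n) 1)" "sphere (0::real^'n) 1 \<noteq> {}"
    by simp_all
  ultimately obtain y0 where y0: "norm y0 = 1" and
    max: "\<And>y. norm y = 1 \<Longrightarrow> y \<bullet> (M *v y) \<le> y0 \<bullet> (M *v y0)"
    using continuous_attains_sup[of "sphere 0 1" "\<lambda>y::real^'n. y \<bullet> (M *v y)"]
    by (metis mem_sphere_0)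
  define e where "e = - (y0 \<bullet> (M *v y0))"
  have "y0 \<noteq> 0"
    using y0 by auto
  then have "e > 0"
    using assms by (simp add: neg_def_def e_def)
  moreover have "y \<bullet> (M *v y) \<le> - e * (norm y)\<^sup>2" for y
  proof (cases "y = 0")
    case False
    have "(y \<bullet> (M *v y)) / (norm y)\<^sup>2 = (y /\<^sub>R norm y) \<bullet> (M *v (y /\<^sub>R norm y))"
      by (simp add: matrix_vector_mult_scaleR power2_eq_square divide_inverse)
    also have "\<dots> \<le> - e"
      using False max[of "y /\<^sub>R norm y"] by (simp add: e_def)
    finally show ?thesis
      using False by (simp add: divide_le_eq mult.commute)
  qed simp
  ultimately show ?thesis by (rule that)
qed

lemma pos_diag_symmetric: "pos_diag S \<Longrightarrow> symmetric_mat S"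
  unfolding pos_diag_def symmetric_mat_def transpose_def vec_eq_iff
  by (metis vec_lambda_beta)

lemma relu_quadratic_form_le:
  assumes "pos_diag S"
  shows "relu x \<bullet> (S *v relu x) \<le> x \<bullet> (S *v x)"
proof -
  have diag: "S *v y = (\<chi> i. S$i$i * y$i)" for y
  proof -
    have "(\<Sum>j\<in>UNIV. S$i$j * y$j) = S$i$i * y$i" for i
      using assms unfolding pos_diag_def by (subst sum.remove[of _ i]) auto
    then show ?thesis by (simp add: matrix_vector_mult_def)
  qed
  have "relu x $ i * (S$i$i * relu x $ i) \<le> x$i * (S$i$i * x$i)" for i
    using assms unfolding pos_diag_def relu_def by (auto simp: zero_le_mult_iff)
  then show ?thesis
    unfolding diag inner_vec_def by (simp add: sum_mono)
qed

lemma in_l2e_any: "in_l2e (f :: nat \<Rightarrow> 'a::real_normed_vector)"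
  unfolding in_l2e_def in_l2_def
  by (intro allI summable_finite[of "{..\<tau>}" for \<tau>]) (auto simp: trunc_def)

lemma l2norm_trunc: "l2norm (trunc f \<tau>) = sqrt (\<Sum>k\<le>\<tau>. (norm (f k))\<^sup>2)"
proof -
  have "(\<Sum>k. (norm (trunc f \<tau> k))\<^sup>2) = (\<Sum>k\<le>\<tau>. (norm (trunc f \<tau> k))\<^sup>2)"
    by (rule suminf_finite) (auto simp: trunc_def)
  also have "\<dots> = (\<Sum>k\<le>\<tau>. (norm (f k))\<^sup>2)"
    by (rule sum.cong) (auto simp: trunc_def)
  finally show ?thesis by (simp add: l2norm_def)
qed

lemma l2norm_trunc_le:
  assumes "\<gamma> \<ge> 0" "(\<Sum>k\<le>\<tau>. (norm (f k))\<^sup>2) \<le> \<gamma>\<^sup>2 * (\<Sum>k\<le>\<tau>. (norm (g k))\<^sup>2)"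
  shows "l2norm (trunc f \<tau>) \<le> \<gamma> * l2norm (trunc g \<tau>)"
  using real_sqrt_le_mono[OF assms(2)] assms(1)
  by (simp add: l2norm_trunc real_sqrt_mult)

lemma young_mult_le:
  fixes e B a b :: real
  assumes "e > 0"
  shows "B * a * b \<le> e/2 * a\<^sup>2 + B\<^sup>2 / (2*e) * b\<^sup>2"
proof -
  have "0 \<le> (e*a - B*b)\<^sup>2" by simp
  then have "2*e*(B*a*b) \<le> e\<^sup>2*a\<^sup>2 + B\<^sup>2*b\<^sup>2"
    by (simp add: power2_eq_square algebra_simps)
  then show ?thesis
    using assms by (simp add: field_simps power2_eq_square)
qed

lemma dissipation_sum_le:
  fixes V Y E q :: "nat \<Rightarrow> real"
  assumes "c > 0" "V 0 = 0" "V (Suc \<tau>) \<ge> 0" "(\<Sum>k\<le>\<tau>. q k) \<ge> 0"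
    and step: "\<And>k. V (Suc k) - V k + c * Y k + q k \<le> C * E k"
  shows "(\<Sum>k\<le>\<tau>. Y k) \<le> C / c * (\<Sum>k\<le>\<tau>. E k)"
proof -
  have "(\<Sum>k\<le>\<tau>. V (Suc k) - V k + c * Y k + q k) \<le> (\<Sum>k\<le>\<tau>. C * E k)"
    by (rule sum_mono) (rule step)
  moreover have "(\<Sum>k\<le>\<tau>. V (Suc k) - V k) = V (Suc \<tau>) - V 0"
    using sum_lessThan_telescope[of V "Suc \<tau>"] by (simp add: lessThan_Suc_atMost)
  ultimately have "c * (\<Sum>k\<le>\<tau>. Y k) \<le> C * (\<Sum>k\<le>\<tau>. E k)"
    using assms(2-4) by (simp add: sum.distrib sum_distrib_left)
  then show ?thesis
    using assms(1) by (simp add: field_simps)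
qed

lemma norm_vstack_matrix_vector_le:
  "norm (vstack (A *v x) w) \<le> (onorm ((*v) A) + 1) * norm (vstack x w)"
proof -
  have "norm (vstack (A *v x) w) \<le> onorm ((*v) A) * norm x + norm w"
    using norm_vstack_le[of "A *v x" w] norm_matrix_vector_le[of A x] by linarith
  also have "\<dots> \<le> onorm ((*v) A) * norm (vstack x w) + norm (vstack x w)"
    using norm_le_norm_vstack_left norm_le_norm_vstack_right onorm_matrix_nonneg
    by (intro add_mono mult_left_mono) auto
  finally show ?thesis by (simp add: algebra_simps)
qed

definition lmi_matrix ::
  "real^'n^'n \<Rightarrow> real^'m^'n \<Rightarrow> real^'n^'m \<Rightarrow> real^('m + 'm)^('m + 'm) \<Rightarrow> real^'n^'n \<Rightarrow>
   real^'m^'m \<Rightarrow> real^('n + 'm)^('n + 'm)" where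
  "lmi_matrix Lam Win Wout Pm P S = block2 (- P) 0 0 (- S)
     + transpose (block2 Lam Win Wout 0) ** block2 P 0 0 S ** block2 Lam Win Wout 0
     + transpose (block2 Wout 0 0 (mat 1)) ** Pm ** block2 Wout 0 0 (mat 1)"

lemma lmi_matrix_quadratic_form:
  fixes Lam :: "real^'n::finite^'n" and Win :: "real^'m::finite^'n"
  shows "vstack x w \<bullet> (lmi_matrix Lam Win Wout Pm P S *v vstack x w) =
    (Lam *v x + Win *v w) \<bullet> (P *v (Lam *v x + Win *v w)) - x \<bullet> (P *v x)
    + (Wout *v x) \<bullet> (S *v (Wout *v x)) - w \<bullet> (S *v w)
    + vstack (Wout *v x) w \<bullet> (Pm *v vstack (Wout *v x) w)"
  by (simp add: lmi_matrix_def matrix_vector_mult_add_rdistrib inner_add_right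
      inner_transpose_mult_mult block2_mult_vstack inner_vstack matrix_vector_mult_uminus)

lemma rnn_supply_perturbation:
  fixes Lam :: "real^'n::finite^'n" and Win :: "real^'m::finite^'n" and Wout :: "real^'n^'m"
  assumes P: "psd P" and S: "pos_diag S" and Pm: "symmetric_mat Pm"
  obtains D B where "D \<ge> 0"
    "\<And>x w s v. w = relu (Wout *v x + s) \<Longrightarrow>
       (Lam *v x + Win *v w + v) \<bullet> (P *v (Lam *v x + Win *v w + v)) - x \<bullet> (P *v x)
       + vstack (Wout *v x + s) w \<bullet> (Pm *v vstack (Wout *v x + s) w)
       \<le> vstack x w \<bullet> (lmi_matrix Lam Win Wout Pm P S *v vstack x w)
         + B * norm (vstack x w) * norm (vstack s v) + D * (norm (vstack s v))\<^sup>2"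
proof -
  define KL where "KL = onorm ((*v) Lam)"
  define KW where "KW = onorm ((*v) Win)"
  define KO where "KO = onorm ((*v) Wout)"
  define KP where "KP = onorm ((*v) P)"
  define KS where "KS = onorm ((*v) S)"
  define KPi where "KPi = onorm ((*v) Pm)"
  have K_nonneg: "KL \<ge> 0" "KW \<ge> 0" "KO \<ge> 0" "KP \<ge> 0" "KS \<ge> 0" "KPi \<ge> 0"
    by (simp_all add: KL_def KW_def KO_def KP_def KS_def KPi_def onorm_matrix_nonneg)
  have "(Lam *v x + Win *v w + v) \<bullet> (P *v (Lam *v x + Win *v w + v)) - x \<bullet> (P *v x)
       + vstack (Wout *v x + s) w \<bullet> (Pm *v vstack (Wout *v x + s) w)
       \<le> vstack x w \<bullet> (lmi_matrix Lam Win Wout Pm P S *v vstack x w)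
         + 2 * (KP * (KL + KW) + KS * KO + KPi * (KO + 1)) * norm (vstack x w) * norm (vstack s v)
         + (KP + KS + KPi) * (norm (vstack s v))\<^sup>2"
    if w: "w = relu (Wout *v x + s)" for x w s v
  proof -
    define a where "a = Lam *v x + Win *v w"
    define z where "z = Wout *v x"
    define ny where "ny = norm (vstack x w)"
    define ne where "ne = norm (vstack s v)"
    have ny: "norm x \<le> ny" "norm w \<le> ny" and ne: "norm s \<le> ne" "norm v \<le> ne"
      unfolding ny_def ne_def by (simp_all add: norm_le_norm_vstack_left norm_le_norm_vstack_right)
    have "norm a \<le> KL * norm x + KW * norm w"
      using norm_triangle_ineq[of "Lam *v x" "Win *v w"] norm_matrix_vector_le[of Lam x]
        norm_matrix_vector_le[of Win w] unfolding a_def KL_def KW_def by linarith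
    also have "\<dots> \<le> (KL + KW) * ny"
      using ny K_nonneg by (simp add: distrib_right add_mono mult_left_mono)
    finally have P_step:
      "(a + v) \<bullet> (P *v (a + v)) \<le> a \<bullet> (P *v a) + KP * (2 * ((KL + KW) * ny) * ne + ne\<^sup>2)"
      using quadratic_form_add_le P ne unfolding KP_def psd_def by blast
    have "norm z \<le> KO * ny"
      using norm_matrix_vector_le[of Wout x] mult_left_mono[OF ny(1) K_nonneg(3)]
      unfolding z_def KO_def by linarith
    then have S_step: "w \<bullet> (S *v w) \<le> z \<bullet> (S *v z) + KS * (2 * (KO * ny) * ne + ne\<^sup>2)"
      using relu_quadratic_form_le[OF S, of "z + s"]
        quadratic_form_add_le[OF pos_diag_symmetric[OF S] _ ne(1), of z "KO * ny"]
      unfolding w z_def KS_def by linarith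
    have "norm (vstack z w) \<le> (KO + 1) * ny"
      using norm_vstack_matrix_vector_le unfolding z_def ny_def KO_def by blast
    moreover have "norm (vstack s (0::real^'m)) \<le> ne"
      using norm_vstack_le[of s "0::real^'m"] ne by simp
    ultimately have Pm_step: "vstack (z + s) w \<bullet> (Pm *v vstack (z + s) w)
        \<le> vstack z w \<bullet> (Pm *v vstack z w) + KPi * (2 * ((KO + 1) * ny) * ne + ne\<^sup>2)"
      using quadratic_form_add_le[OF Pm] vstack_add[of z w s 0] unfolding KPi_def by fastforce
    have "2 * (KP * (KL + KW) + KS * KO + KPi * (KO + 1)) * ny * ne + (KP + KS + KPi) * ne\<^sup>2
        = KP * (2 * ((KL + KW) * ny) * ne + ne\<^sup>2) + KS * (2 * (KO * ny) * ne + ne\<^sup>2)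
          + KPi * (2 * ((KO + 1) * ny) * ne + ne\<^sup>2)"
      by (simp add: algebra_simps)
    then show ?thesis
      using P_step S_step Pm_step lmi_matrix_quadratic_form[of x w Lam Win Wout Pm P S]
      unfolding a_def[symmetric] z_def[symmetric] ny_def[symmetric] ne_def[symmetric]
      by linarith
  qed
  moreover have "KP + KS + KPi \<ge> 0" using K_nonneg by simp
  ultimately show ?thesis using that by blast
qed

lemma rnn_dissipation_step:
  fixes Lam :: "real^'n::finite^'n" and Win :: "real^'m::finite^'n" and Wout :: "real^'n^'m"
  assumes P: "psd P" and S: "pos_diag S" and Pm: "symmetric_mat Pm"
    and lmi: "neg_def (lmi_matrix Lam Win Wout Pm P S)"
  obtains c C where "c > 0" "C \<ge> 0"
    "\<And>x w s v. w = relu (Wout *v x + s) \<Longrightarrow>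
       (Lam *v x + Win *v w + v) \<bullet> (P *v (Lam *v x + Win *v w + v)) - x \<bullet> (P *v x)
       + c * (norm (vstack (Wout *v x) w))\<^sup>2
       + vstack (Wout *v x + s) w \<bullet> (Pm *v vstack (Wout *v x + s) w)
       \<le> C * (norm (vstack s v))\<^sup>2"
proof -
  obtain e where e: "e > 0" "\<And>y. y \<bullet> (lmi_matrix Lam Win Wout Pm P S *v y) \<le> - e * (norm y)\<^sup>2"
    using neg_def_uniform[OF lmi] by blast
  obtain D B where D: "D \<ge> 0" and perturb: "\<And>x w s v. w = relu (Wout *v x + s) \<Longrightarrow>
       (Lam *v x + Win *v w + v) \<bullet> (P *v (Lam *v x + Win *v w + v)) - x \<bullet> (P *v x)
       + vstack (Wout *v x + s) w \<bullet> (Pm *v vstack (Wout *v x + s) w)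
       \<le> vstack x w \<bullet> (lmi_matrix Lam Win Wout Pm P S *v vstack x w)
         + B * norm (vstack x w) * norm (vstack s v) + D * (norm (vstack s v))\<^sup>2"
    by (rule rnn_supply_perturbation[OF P S Pm, where Lam = Lam and Win = Win and Wout = Wout]) blast
  define KO where "KO = onorm ((*v) Wout)"
  define c where "c = e / (2 * (KO + 1)\<^sup>2)"
  have KO: "KO \<ge> 0" by (simp add: KO_def onorm_matrix_nonneg)
  have "c > 0" using e(1) KO by (simp add: c_def add_nonneg_eq_0_iff)
  moreover have "D + B\<^sup>2 / (2 * e) \<ge> 0" using e(1) D by simp
  moreover have "(Lam *v x + Win *v w + v) \<bullet> (P *v (Lam *v x + Win *v w + v)) - x \<bullet> (P *v x)
       + c * (norm (vstack (Wout *v x) w))\<^sup>2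
       + vstack (Wout *v x + s) w \<bullet> (Pm *v vstack (Wout *v x + s) w)
       \<le> (D + B\<^sup>2 / (2 * e)) * (norm (vstack s v))\<^sup>2"
    if w: "w = relu (Wout *v x + s)" for x w s v
  proof -
    have "(norm (vstack (Wout *v x) w))\<^sup>2 \<le> ((KO + 1) * norm (vstack x w))\<^sup>2"
      using norm_vstack_matrix_vector_le[of Wout x w] unfolding KO_def
      by (intro power_mono) auto
    then have "c * (norm (vstack (Wout *v x) w))\<^sup>2 \<le> c * ((KO + 1) * norm (vstack x w))\<^sup>2"
      using \<open>c > 0\<close> by simp
    also have "\<dots> = e / 2 * (norm (vstack x w))\<^sup>2"
      using KO by (simp add: c_def power_mult_distrib)
    finally show ?thesis
      using perturb[OF w, of v] e(2)[of "vstack x w"]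
        young_mult_le[OF e(1), of B "norm (vstack x w)" "norm (vstack s v)"]
      unfolding distrib_right by linarith
  qed
  ultimately show ?thesis by (rule that)
qed

theorem theorem1:
  fixes Lam :: "real^'n::finite^'n"
    and Win :: "real^'m::finite^'n"
    and Wout :: "real^'n^'m"
    and Pi :: "real^('m + 'm)^('m + 'm)"
  assumes stable: "schur_stable Lam"
    and Pi_sym: "symmetric_mat Pi"
    and iqc: "\<forall>\<xi> :: nat \<Rightarrow> real^'m. in_l2e \<xi> \<longrightarrow>
               (\<forall>\<tau>. (\<Sum>k\<le>\<tau>. vstack (\<xi> k) (relu (\<xi> k)) \<bullet>
                                (Pi *v vstack (\<xi> k) (relu (\<xi> k)))) \<ge> 0)"
    and lmi: "\<exists>(P :: real^'n^'n) (S :: real^'m^'m). psd P \<and> pos_diag S \<and>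
       neg_def (block2 (- P) 0 0 (- S)
          + transpose (block2 Lam Win Wout 0) ** block2 P 0 0 S ** block2 Lam Win Wout 0
          + transpose (block2 Wout 0 0 (mat 1)) ** Pi ** block2 Wout 0 0 (mat 1))"
  shows "\<exists>\<gamma>::real. \<gamma> \<ge> 0 \<and>
    (\<forall>(s :: nat \<Rightarrow> real^'m) (v :: nat \<Rightarrow> real^'n) (x :: nat \<Rightarrow> real^'n)
       (z :: nat \<Rightarrow> real^'m) (w :: nat \<Rightarrow> real^'m).
       in_l2e s \<and> in_l2e v \<and> x 0 = 0 \<and>
       (\<forall>k. x (Suc k) = Lam *v x k + Win *v w k + v k) \<and>
       (\<forall>k. z k = Wout *v x k) \<and>
       (\<forall>k. w k = relu (z k + s k)) \<longrightarrow>
       (\<forall>\<tau>. l2norm (trunc (\<lambda>k. vstack (z k) (w k)) \<tau>)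
              \<le> \<gamma> * l2norm (trunc (\<lambda>k. vstack (s k) (v k)) \<tau>)))"
proof -
  obtain P S where P: "psd P" and S: "pos_diag S"
    and lmi': "neg_def (lmi_matrix Lam Win Wout Pi P S)"
    using lmi unfolding lmi_matrix_def by blast
  obtain c C where c: "c > 0" "C \<ge> 0" and step: "\<And>x w s v. w = relu (Wout *v x + s) \<Longrightarrow>
       (Lam *v x + Win *v w + v) \<bullet> (P *v (Lam *v x + Win *v w + v)) - x \<bullet> (P *v x)
       + c * (norm (vstack (Wout *v x) w))\<^sup>2
       + vstack (Wout *v x + s) w \<bullet> (Pi *v vstack (Wout *v x + s) w)
       \<le> C * (norm (vstack s v))\<^sup>2"
    by (rule rnn_dissipation_step[OF P S Pi_sym lmi']) blast
  show ?thesis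
  proof (intro exI[of _ "sqrt (C / c)"] conjI allI impI)
    fix s :: "nat \<Rightarrow> real^'m" and v :: "nat \<Rightarrow> real^'n" and x :: "nat \<Rightarrow> real^'n"
      and z :: "nat \<Rightarrow> real^'m" and w :: "nat \<Rightarrow> real^'m" and \<tau> :: nat
    assume H: "in_l2e s \<and> in_l2e v \<and> x 0 = 0 \<and>
       (\<forall>k. x (Suc k) = Lam *v x k + Win *v w k + v k) \<and>
       (\<forall>k. z k = Wout *v x k) \<and> (\<forall>k. w k = relu (z k + s k))"
    have "(\<Sum>k\<le>\<tau>. (norm (vstack (z k) (w k)))\<^sup>2)
        \<le> C / c * (\<Sum>k\<le>\<tau>. (norm (vstack (s k) (v k)))\<^sup>2)"
    proof (rule dissipation_sum_le[OF c(1), where V = "\<lambda>k. x k \<bullet> (P *v x k)"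
          and q = "\<lambda>k. vstack (z k + s k) (w k) \<bullet> (Pi *v vstack (z k + s k) (w k))"])
      show "x (Suc \<tau>) \<bullet> (P *v x (Suc \<tau>)) \<ge> 0"
        using P by (simp add: psd_def)
      show "(\<Sum>k\<le>\<tau>. vstack (z k + s k) (w k) \<bullet> (Pi *v vstack (z k + s k) (w k))) \<ge> 0"
        using iqc in_l2e_any[of "\<lambda>k. z k + s k"] H by auto
    qed (use H step in auto)
    then show "l2norm (trunc (\<lambda>k. vstack (z k) (w k)) \<tau>)
        \<le> sqrt (C / c) * l2norm (trunc (\<lambda>k. vstack (s k) (v k)) \<tau>)"
      using c by (intro l2norm_trunc_le) simp_all
  qed (use c in simp)
qed

end
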